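(* Let $(\mathcal{C},\Delta,\varepsilon)$ be a cocommutative coassociative counital coalgebra over a field $\mathbb{K}$ and let $(\mathcal{C},T)$ be a trilinear shelf. Equip $\mathcal{C}\otimes\mathcal{C}$ with the tensor product coalgebra structure $\Delta(u\otimes v)=(u_{(1)}\otimes v_{(1)})\otimes(u_{(2)}\otimes v_{(2)})$, $\varepsilon(u\otimes v)=\varepsilon(u)\varepsilon(v)$, and define $\lhd_T:(\mathcal{C}\otimes\mathcal{C})\otimes(\mathcal{C}\otimes\mathcal{C})\to\mathcal{C}\otimes\mathcal{C}$ by $(u\otimes v)\lhd_T(m\otimes n)=T(u,m_{(1)},n_{(1)})\otimes T(v,m_{(2)},n_{(2)})$. Then $(\mathcal{C}\otimes\mathcal{C},\lhd_T)$ is a linear shelf. If moreover $(\mathcal{C},T)$ is a trilinear rack, then $(\mathcal{C}\otimes\mathcal{C},\lhd_T)$ is a linear rack, and the map $R^{\lhd_T}:(\mathcal{C}\otimes\mathcal{C})^{\otimes2}\to(\mathcal{C}\otimes\mathcal{C})^{\otimes 2}$, $R^{\lhd_T}(U\otimes V)=V_{(1)}\otimes(U\lhd_T V_{(2)})$, coincides with the map $R^T$ given by $R^T((u\otimes v)\otimes(m\otimes n))=(m_{(1)}\otimes n_{(1)})\otimes\big(T(u,m_{(2)},n_{(2)})\otimes T(v,m_{(3)},n_{(3)})\big)$.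
   Context: Sweedler notation: $\Delta(x)=x_{(1)}\otimes x_{(2)}$, $(\Delta\otimes\mathrm{Id})\Delta(x)=x_{(1)}\otimes x_{(2)}\otimes x_{(3)}$, etc. Cocommutative means $\tau\circ\Delta=\Delta$ with $\tau$ the flip. A coalgebra morphism $f$ satisfies $\Delta'\circ f=(f\otimes f)\circ\Delta$, $\varepsilon'\circ f=\varepsilon$; tensor powers carry the tensor product coalgebra structure. A linear shelf is a coalgebra $\mathcal{C}$ with a coalgebra morphism $\lhd:\mathcal{C}\otimes\mathcal{C}\to\mathcal{C}$ with $(u\lhd v)\lhd w=(u\lhd w_{(1)})\lhd(v\lhd w_{(2)})$; it is a linear rack if there is a linear shelf structure $\widetilde{\lhd}$ on $\mathcal{C}$ with $(u\lhd v_{(2)})\widetilde{\lhd}v_{(1)}=\varepsilon(v)u=(u\widetilde{\lhd}v_{(2)})\lhd v_{(1)}$ for all $u,v$. A trilinear shelf is a coalgebra $\mathcal{C}$ with a coalgebra morphism $T:\mathcal{C}^{\otimes3}\to\mathcal{C}$ such that $T(T(x,y,z),u,v)=T(T(x,u_{(1)},v_{(1)}),T(y,u_{(2)},v_{(2)}),T(z,u_{(3)},v_{(3)}))$ for all $x,y,z,u,v$; it is a trilinear rack if there is a trilinear shelf structure $\widetilde{T}$ on $\mathcal{C}$ with $\widetilde{T}(T(x,y_{(2)},z_{(2)}),z_{(1)},y_{(1)})=\varepsilon(y)\varepsilon(z)x=T(\widetilde{T}(x,y_{(2)},z_{(2)}),z_{(1)},y_{(1)})$ for all $x,y,z$. 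*)

theory Defs
  imports Main
begin

text \<open>Vector spaces over a field 'k are modelled as free vector spaces with a basis indexed
by a type 'a: vectors are finitely supported functions 'a => 'k.  The tensor product of the
spaces with bases 'a and 'b is the space with basis 'a \<times> 'b.  Linear maps are given by the
images of basis vectors and extended linearly.\<close>

definition fsupp :: "('a \<Rightarrow> 'k::zero) \<Rightarrow> bool" where
  "fsupp v \<longleftrightarrow> finite {a. v a \<noteq> 0}"

definition bvec :: "'a \<Rightarrow> 'a \<Rightarrow> 'k::{zero,one}" where
  "bvec a = (\<lambda>x. if x = a then 1 else 0)"

definition lext :: "('a \<Rightarrow> 'c \<Rightarrow> 'k::comm_ring_1) \<Rightarrow> ('a \<Rightarrow> 'k) \<Rightarrow> 'c \<Rightarrow> 'k" where
  "lext f v = (\<lambda>c. \<Sum>a\<in>{a. v a \<noteq> 0}. v a * f a c)"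

definition lfun :: "('a \<Rightarrow> 'k::comm_ring_1) \<Rightarrow> ('a \<Rightarrow> 'k) \<Rightarrow> 'k" where
  "lfun f v = (\<Sum>a\<in>{a. v a \<noteq> 0}. v a * f a)"

definition tens :: "('a \<Rightarrow> 'k::comm_ring_1) \<Rightarrow> ('b \<Rightarrow> 'k) \<Rightarrow> 'a \<times> 'b \<Rightarrow> 'k" where
  "tens u v = (\<lambda>p. u (fst p) * v (snd p))"

definition tmap :: "('a \<Rightarrow> 'c \<Rightarrow> 'k::comm_ring_1) \<Rightarrow> ('b \<Rightarrow> 'd \<Rightarrow> 'k) \<Rightarrow> ('a \<times> 'b \<Rightarrow> 'k) \<Rightarrow> 'c \<times> 'd \<Rightarrow> 'k" where
  "tmap f g = lext (\<lambda>(a, b). tens (f a) (g b))"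

definition linmap :: "('a \<Rightarrow> 'c \<Rightarrow> 'k::zero) \<Rightarrow> bool" where
  "linmap f \<longleftrightarrow> (\<forall>a. fsupp (f a))"

definition coalgebra :: "('a \<Rightarrow> 'a \<times> 'a \<Rightarrow> 'k::comm_ring_1) \<Rightarrow> ('a \<Rightarrow> 'k) \<Rightarrow> bool" where
  "coalgebra D e \<longleftrightarrow> linmap D
     \<and> (\<forall>a x y z. tmap D bvec (D a) ((x, y), z) = tmap bvec D (D a) (x, (y, z)))
     \<and> (\<forall>a. lext (\<lambda>(x, y). (\<lambda>w. e x * bvec y w)) (D a) = bvec a)
     \<and> (\<forall>a. lext (\<lambda>(x, y). (\<lambda>w. bvec x w * e y)) (D a) = bvec a)"

definition cocommutative :: "('a \<Rightarrow> 'a \<times> 'a \<Rightarrow> 'k) \<Rightarrow> bool" where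
  "cocommutative D \<longleftrightarrow> (\<forall>a x y. D a (x, y) = D a (y, x))"

definition tcD :: "('a \<Rightarrow> 'a \<times> 'a \<Rightarrow> 'k::comm_ring_1) \<Rightarrow> ('b \<Rightarrow> 'b \<times> 'b \<Rightarrow> 'k)
                   \<Rightarrow> 'a \<times> 'b \<Rightarrow> ('a \<times> 'b) \<times> ('a \<times> 'b) \<Rightarrow> 'k" where
  "tcD D1 D2 = (\<lambda>(a, b). (\<lambda>((a1, b1), (a2, b2)). D1 a (a1, a2) * D2 b (b1, b2)))"

definition tce :: "('a \<Rightarrow> 'k::comm_ring_1) \<Rightarrow> ('b \<Rightarrow> 'k) \<Rightarrow> 'a \<times> 'b \<Rightarrow> 'k" where
  "tce e1 e2 = (\<lambda>(a, b). e1 a * e2 b)"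

definition coalg_hom :: "('a \<Rightarrow> 'a \<times> 'a \<Rightarrow> 'k::comm_ring_1) \<Rightarrow> ('a \<Rightarrow> 'k)
    \<Rightarrow> ('c \<Rightarrow> 'c \<times> 'c \<Rightarrow> 'k) \<Rightarrow> ('c \<Rightarrow> 'k) \<Rightarrow> ('a \<Rightarrow> 'c \<Rightarrow> 'k) \<Rightarrow> bool" where
  "coalg_hom D1 e1 D2 e2 f \<longleftrightarrow> linmap f
     \<and> (\<forall>a. lext D2 (f a) = tmap f f (D1 a))
     \<and> (\<forall>a. lfun e2 (f a) = e1 a)"

definition op2 :: "('a \<times> 'a \<Rightarrow> 'a \<Rightarrow> 'k::comm_ring_1) \<Rightarrow> ('a \<Rightarrow> 'k) \<Rightarrow> ('a \<Rightarrow> 'k) \<Rightarrow> 'a \<Rightarrow> 'k" where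
  "op2 L u v = lext L (tens u v)"

definition op3 :: "('a \<times> ('a \<times> 'a) \<Rightarrow> 'a \<Rightarrow> 'k::comm_ring_1)
    \<Rightarrow> ('a \<Rightarrow> 'k) \<Rightarrow> ('a \<Rightarrow> 'k) \<Rightarrow> ('a \<Rightarrow> 'k) \<Rightarrow> 'a \<Rightarrow> 'k" where
  "op3 T x y z = lext T (tens x (tens y z))"

definition Delta2 :: "('a \<Rightarrow> 'a \<times> 'a \<Rightarrow> 'k::comm_ring_1) \<Rightarrow> ('a \<Rightarrow> 'k) \<Rightarrow> 'a \<times> ('a \<times> 'a) \<Rightarrow> 'k" where
  "Delta2 D w = tmap bvec D (lext D w)"

definition linear_shelf :: "('a \<Rightarrow> 'a \<times> 'a \<Rightarrow> 'k::comm_ring_1) \<Rightarrow> ('a \<Rightarrow> 'k)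
    \<Rightarrow> ('a \<times> 'a \<Rightarrow> 'a \<Rightarrow> 'k) \<Rightarrow> bool" where
  "linear_shelf D e L \<longleftrightarrow> coalgebra D e \<and> coalg_hom (tcD D D) (tce e e) D e L
     \<and> (\<forall>u v w. fsupp u \<longrightarrow> fsupp v \<longrightarrow> fsupp w \<longrightarrow>
          op2 L (op2 L u v) w
          = lext (\<lambda>(p, q). op2 L (op2 L u (bvec p)) (op2 L v (bvec q))) (lext D w))"

definition linear_rack :: "('a \<Rightarrow> 'a \<times> 'a \<Rightarrow> 'k::comm_ring_1) \<Rightarrow> ('a \<Rightarrow> 'k)
    \<Rightarrow> ('a \<times> 'a \<Rightarrow> 'a \<Rightarrow> 'k) \<Rightarrow> bool" where
  "linear_rack D e L \<longleftrightarrow> linear_shelf D e L \<and>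
     (\<exists>L'. linear_shelf D e L' \<and>
       (\<forall>u v. fsupp u \<longrightarrow> fsupp v \<longrightarrow>
          lext (\<lambda>(p, q). op2 L' (op2 L u (bvec q)) (bvec p)) (lext D v) = (\<lambda>x. lfun e v * u x)
        \<and> lext (\<lambda>(p, q). op2 L (op2 L' u (bvec q)) (bvec p)) (lext D v) = (\<lambda>x. lfun e v * u x)))"

definition trilinear_shelf :: "('a \<Rightarrow> 'a \<times> 'a \<Rightarrow> 'k::comm_ring_1) \<Rightarrow> ('a \<Rightarrow> 'k)
    \<Rightarrow> ('a \<times> ('a \<times> 'a) \<Rightarrow> 'a \<Rightarrow> 'k) \<Rightarrow> bool" where
  "trilinear_shelf D e T \<longleftrightarrow> coalgebra D e \<and> coalg_hom (tcD D (tcD D D)) (tce e (tce e e)) D e T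
     \<and> (\<forall>x y z u v. fsupp x \<longrightarrow> fsupp y \<longrightarrow> fsupp z \<longrightarrow> fsupp u \<longrightarrow> fsupp v \<longrightarrow>
          op3 T (op3 T x y z) u v
          = lext (\<lambda>((p1, (p2, p3)), (q1, (q2, q3))).
                    op3 T (op3 T x (bvec p1) (bvec q1)) (op3 T y (bvec p2) (bvec q2))
                          (op3 T z (bvec p3) (bvec q3)))
                 (tens (Delta2 D u) (Delta2 D v)))"

definition trilinear_rack :: "('a \<Rightarrow> 'a \<times> 'a \<Rightarrow> 'k::comm_ring_1) \<Rightarrow> ('a \<Rightarrow> 'k)
    \<Rightarrow> ('a \<times> ('a \<times> 'a) \<Rightarrow> 'a \<Rightarrow> 'k) \<Rightarrow> bool" where
  "trilinear_rack D e T \<longleftrightarrow> trilinear_shelf D e T \<and>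
     (\<exists>T'. trilinear_shelf D e T' \<and>
       (\<forall>x y z. fsupp x \<longrightarrow> fsupp y \<longrightarrow> fsupp z \<longrightarrow>
          lext (\<lambda>((p1, p2), (q1, q2)). op3 T' (op3 T x (bvec p2) (bvec q2)) (bvec q1) (bvec p1))
               (tens (lext D y) (lext D z)) = (\<lambda>w. lfun e y * lfun e z * x w)
        \<and> lext (\<lambda>((p1, p2), (q1, q2)). op3 T (op3 T' x (bvec p2) (bvec q2)) (bvec q1) (bvec p1))
               (tens (lext D y) (lext D z)) = (\<lambda>w. lfun e y * lfun e z * x w)))"

definition lhdT :: "('a \<Rightarrow> 'a \<times> 'a \<Rightarrow> 'k::comm_ring_1) \<Rightarrow> ('a \<times> ('a \<times> 'a) \<Rightarrow> 'a \<Rightarrow> 'k)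
    \<Rightarrow> ('a \<times> 'a) \<times> ('a \<times> 'a) \<Rightarrow> 'a \<times> 'a \<Rightarrow> 'k" where
  "lhdT D T = (\<lambda>((u, v), (m, n)).
      lext (\<lambda>((m1, m2), (n1, n2)). tens (op3 T (bvec u) (bvec m1) (bvec n1))
                                          (op3 T (bvec v) (bvec m2) (bvec n2)))
           (tens (D m) (D n)))"

definition Rlhd :: "('b \<Rightarrow> 'b \<times> 'b \<Rightarrow> 'k::comm_ring_1) \<Rightarrow> ('b \<times> 'b \<Rightarrow> 'b \<Rightarrow> 'k)
    \<Rightarrow> 'b \<times> 'b \<Rightarrow> 'b \<times> 'b \<Rightarrow> 'k" where
  "Rlhd D L = (\<lambda>(U, V). lext (\<lambda>(p, q). tens (bvec p) (op2 L (bvec U) (bvec q))) (D V))"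

definition RT :: "('a \<Rightarrow> 'a \<times> 'a \<Rightarrow> 'k::comm_ring_1) \<Rightarrow> ('a \<times> ('a \<times> 'a) \<Rightarrow> 'a \<Rightarrow> 'k)
    \<Rightarrow> ('a \<times> 'a) \<times> ('a \<times> 'a) \<Rightarrow> ('a \<times> 'a) \<times> ('a \<times> 'a) \<Rightarrow> 'k" where
  "RT D T = (\<lambda>((u, v), (m, n)).
      lext (\<lambda>((m1, (m2, m3)), (n1, (n2, n3))).
              tens (tens (bvec m1) (bvec n1))
                   (tens (op3 T (bvec u) (bvec m2) (bvec n2)) (op3 T (bvec v) (bvec m3) (bvec n3))))
           (tens (Delta2 D (bvec m)) (Delta2 D (bvec n))))"

end

theory Submission
  imports Defs
begin

(* Every linear map in sight is the linear extension of its values on basis vectors, so each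
   identity only has to be checked on basis tensors, where it becomes an equation between nested
   Sweedler sums.  That \<lhd>_T is a coalgebra morphism and satisfies the shelf identity then
   comes down to three facts: T is a coalgebra morphism; the trilinear shelf identity can be read
   as T(T(a, V), w) = T(T(a, w_(1)), V \<lhd>_T w_(2)) for V in C \<otimes> C; and, by
   cocommutativity, the two middle factors of w_(1) \<otimes> w_(2) \<otimes> w_(3) \<otimes> w_(4)
   may be interchanged, which is exactly what the tensor product coalgebra structure of
   C \<otimes> C demands.  If T' is a rack inverse of T, then T' with its last two arguments
   swapped is again a trilinear shelf (cocommutativity once more), and the operation it induces
   on C \<otimes> C is a rack inverse of \<lhd>_T.  The identity R^\<lhd> = R^T is a reordering
   of sums. *)

section \<open>Linear extension\<close>

lemma supp_bvec: "{x. (bvec a :: 'a \<Rightarrow> 'k::comm_ring_1) x \<noteq> 0} = {a}"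
  by (auto simp: bvec_def)

lemma fsupp_bvec [simp]: "fsupp (bvec a :: 'a \<Rightarrow> 'k::comm_ring_1)"
  by (simp add: fsupp_def supp_bvec)

lemma lext_bvec [simp]: "lext f (bvec a) = f a"
  by (rule ext) (simp add: lext_def supp_bvec bvec_def)

lemma lext_bvec_id: "fsupp v \<Longrightarrow> lext bvec v = v"
  unfolding lext_def bvec_def fsupp_def
  by (rule ext) (auto simp: if_distrib cong: if_cong)

lemma lext_cong: "(\<And>a. v a \<noteq> 0 \<Longrightarrow> f a = g a) \<Longrightarrow> lext f v = lext g v"
  unfolding lext_def by (intro ext sum.cong) auto

lemma lext_arg_cong: "(\<And>a. f a = g a) \<Longrightarrow> lext f v = lext g v"
  by (rule lext_cong) simp

lemma lext_eq_sum_superset: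
  assumes "finite S" "{a. v a \<noteq> 0} \<subseteq> S"
  shows "lext f v c = (\<Sum>a\<in>S. v a * f a c)"
  unfolding lext_def by (rule sum.mono_neutral_left) (use assms in auto)

lemma lext_nonzeroD:
  assumes "lext f v c \<noteq> 0"
  shows "\<exists>a. v a \<noteq> 0 \<and> f a c \<noteq> 0"
proof -
  obtain a where "a \<in> {a. v a \<noteq> 0}" "v a * f a c \<noteq> 0"
    using assms unfolding lext_def by (meson sum.not_neutral_contains_not_neutral)
  then show ?thesis by auto
qed

lemma fsupp_lext:
  assumes "fsupp v" "\<And>a. v a \<noteq> 0 \<Longrightarrow> fsupp (f a)"
  shows "fsupp (lext f v)"
proof -
  have "{c. lext f v c \<noteq> 0} \<subseteq> (\<Union>a\<in>{a. v a \<noteq> 0}. {c. f a c \<noteq> 0})"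
    by (auto dest!: lext_nonzeroD)
  moreover have "finite (\<Union>a\<in>{a. v a \<noteq> 0}. {c. f a c \<noteq> 0})"
    using assms by (auto simp: fsupp_def)
  ultimately show ?thesis unfolding fsupp_def by (rule finite_subset)
qed

lemma lext_lext:
  assumes v: "fsupp v" and g: "\<And>a. v a \<noteq> 0 \<Longrightarrow> fsupp (g a)"
  shows "lext f (lext g v) = lext (\<lambda>a. lext f (g a)) v"
proof (rule ext)
  fix c
  let ?A = "{a. v a \<noteq> 0}"
  let ?B = "\<Union>a\<in>?A. {b. g a b \<noteq> 0}"
  have fB: "finite ?B" using v g by (auto simp: fsupp_def)
  have "lext f (lext g v) c = (\<Sum>b\<in>?B. lext g v b * f b c)"
    using fB by (rule lext_eq_sum_superset) (auto dest!: lext_nonzeroD)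
  also have "\<dots> = (\<Sum>a\<in>?A. \<Sum>b\<in>?B. v a * g a b * f b c)"
    by (simp add: lext_def sum_distrib_right sum.swap[of _ ?B])
  also have "\<dots> = (\<Sum>a\<in>?A. v a * lext f (g a) c)"
  proof (rule sum.cong[OF refl])
    fix a assume "a \<in> ?A"
    then have "lext f (g a) c = (\<Sum>b\<in>?B. g a b * f b c)"
      using fB by (intro lext_eq_sum_superset) auto
    then show "(\<Sum>b\<in>?B. v a * g a b * f b c) = v a * lext f (g a) c"
      by (simp add: sum_distrib_left mult.assoc)
  qed
  finally show "lext f (lext g v) c = lext (\<lambda>a. lext f (g a)) v c"
    by (simp add: lext_def)
qed

(* No finiteness hypotheses: if x or y has infinite support, both sides are 0. *)
lemma lext_commute:
  "lext (\<lambda>a. lext (F a) y) x = lext (\<lambda>b. lext (\<lambda>a. F a b) x) y"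
proof (rule ext)
  fix c
  have "lext (\<lambda>a. lext (F a) y) x c
      = (\<Sum>a\<in>{a. x a \<noteq> 0}. \<Sum>b\<in>{b. y b \<noteq> 0}. x a * (y b * F a b c))"
    unfolding lext_def by (simp add: sum_distrib_left)
  also have "\<dots> = (\<Sum>b\<in>{b. y b \<noteq> 0}. \<Sum>a\<in>{a. x a \<noteq> 0}. y b * (x a * F a b c))"
    by (subst sum.swap) (simp add: mult.left_commute)
  also have "\<dots> = lext (\<lambda>b. lext (\<lambda>a. F a b) x) y c"
    unfolding lext_def by (simp add: sum_distrib_left)
  finally show "lext (\<lambda>a. lext (F a) y) x c = lext (\<lambda>b. lext (\<lambda>a. F a b) x) y c" .
qed

lemma lext_reindex:
  assumes "\<And>x. g (h x) = x" and "\<And>y. h (g y) = y"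
  shows "lext F (\<lambda>x. v (h x)) = lext (\<lambda>y. F (g y)) v"
proof -
  have supp: "{x. v (h x) \<noteq> 0} = g ` {y. v y \<noteq> 0}"
    using assms by (auto intro: image_eqI[where x = "h _"])
  have "inj_on g {y. v y \<noteq> 0}"
    by (metis assms(2) inj_onI)
  then show ?thesis
    unfolding lext_def supp by (simp add: sum.reindex assms(2))
qed

lemma fsupp_smult: "fsupp v \<Longrightarrow> fsupp (\<lambda>c. (k :: 'k::mult_zero) * v c)"
  unfolding fsupp_def by (erule finite_subset[rotated]) auto

lemma lext_const_mult: "lext (\<lambda>a c. k * f a c) v = (\<lambda>c. k * lext f v c)"
  by (simp add: lext_def sum_distrib_left mult.left_commute)

lemma lext_smult_bvec: "lext f (\<lambda>c. k * bvec a c) = (\<lambda>c. k * f a c)"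
proof (cases "k = 0")
  case False
  then have "{x. k * bvec a x \<noteq> 0} = {a}" by (auto simp: bvec_def)
  then show ?thesis by (simp add: lext_def bvec_def)
qed (simp add: lext_def)

lemma lext_mult_lfun: "lext (\<lambda>x c. e x * h c) v = (\<lambda>c. lfun e v * h c)"
  by (simp add: lext_def lfun_def sum_distrib_right mult.assoc)

lemma lfun_bvec [simp]: "lfun e (bvec a) = e a"
  by (simp add: lfun_def supp_bvec bvec_def)

lemma lfun_eq_lext: "lfun f w = lext (\<lambda>a _. f a) w ()"
  by (simp add: lfun_def lext_def)

lemma lfun_lext:
  assumes "fsupp v" "\<And>a. fsupp (g a)"
  shows "lfun f (lext g v) = lfun (\<lambda>a. lfun f (g a)) v"
  using assms by (simp add: lfun_eq_lext lext_lext)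

lemma fsupp_tens [simp]: "fsupp x \<Longrightarrow> fsupp y \<Longrightarrow> fsupp (tens x y)"
  unfolding fsupp_def tens_def
  by (rule finite_subset[of _ "{a. x a \<noteq> 0} \<times> {b. y b \<noteq> 0}"]) auto

lemma tens_bvec [simp]: "tens (bvec a :: 'a \<Rightarrow> 'k::comm_ring_1) (bvec b) = bvec (a, b)"
  by (auto simp: tens_def bvec_def)

lemma lext_tens:
  assumes "fsupp x" "fsupp y"
  shows "lext f (tens x y) = lext (\<lambda>a. lext (\<lambda>b. f (a, b)) y) x"
proof (rule ext)
  fix c
  let ?S = "{a. x a \<noteq> 0} \<times> {b. y b \<noteq> 0}"
  have "lext f (tens x y) c = (\<Sum>p\<in>?S. tens x y p * f p c)"
    using assms by (intro lext_eq_sum_superset) (auto simp: fsupp_def tens_def)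
  also have "\<dots> = (\<Sum>a\<in>{a. x a \<noteq> 0}. \<Sum>b\<in>{b. y b \<noteq> 0}. x a * (y b * f (a, b) c))"
    by (simp add: sum.cartesian_product tens_def mult.assoc split_beta)
  also have "\<dots> = lext (\<lambda>a. lext (\<lambda>b. f (a, b)) y) x c"
    by (simp add: lext_def sum_distrib_left)
  finally show "lext f (tens x y) c = lext (\<lambda>a. lext (\<lambda>b. f (a, b)) y) x c" .
qed

lemma tens_lext_left: "tens (lext f x) y = lext (\<lambda>a. tens (f a) y) x"
  by (rule ext) (simp add: tens_def lext_def sum_distrib_right mult.assoc)

lemma tens_lext_right: "tens x (lext g y) = lext (\<lambda>b. tens x (g b)) y"
  by (rule ext) (simp add: tens_def lext_def sum_distrib_left mult.left_commute)

lemma tens_lext_lext: "tens (lext f x) (lext g y) = lext (\<lambda>a. lext (\<lambda>b. tens (f a) (g b)) y) x"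
  unfolding tens_lext_left by (simp add: tens_lext_right)

lemma lfun_tens:
  assumes "fsupp x" "fsupp y"
  shows "lfun (tce e1 e2) (tens x y) = lfun e1 x * lfun e2 y"
  unfolding lfun_eq_lext tce_def lext_tens[OF assms]
  by (simp add: lext_def sum_distrib_left sum_distrib_right mult_ac sum.swap[of _ "{a. y a \<noteq> 0}"])

lemma op2_bvec [simp]: "op2 L (bvec a) (bvec b) = (L (a, b) :: 'a \<Rightarrow> 'k::comm_ring_1)"
  by (simp add: op2_def)

lemma op2_eq_lext: "fsupp x \<Longrightarrow> fsupp y \<Longrightarrow> op2 K x y = lext (\<lambda>a. lext (\<lambda>b. K (a, b)) y) x"
  unfolding op2_def by (rule lext_tens)

lemma op2_bvec_right: "fsupp x \<Longrightarrow> op2 K x (bvec p) = lext (\<lambda>z. K (z, p)) x"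
  by (simp add: op2_eq_lext)

lemma fsupp_op2: "(\<And>z. fsupp (K z)) \<Longrightarrow> fsupp x \<Longrightarrow> fsupp y \<Longrightarrow> fsupp (op2 K x y)"
  unfolding op2_def by (intro fsupp_lext) auto

lemma op2_lext_left:
  assumes "\<And>z. fsupp (K z)" "fsupp x" "fsupp y" "\<And>a. fsupp (f a)"
  shows "op2 K (lext f x) y = lext (\<lambda>a. op2 K (f a) y) x"
  using assms by (simp add: op2_eq_lext fsupp_lext lext_lext)

lemma op2_lext_right:
  assumes "\<And>z. fsupp (K z)" "fsupp x" "fsupp y" "\<And>a. fsupp (f a)"
  shows "op2 K x (lext f y) = lext (\<lambda>b. op2 K x (f b)) y"
  using assms by (simp add: op2_eq_lext fsupp_lext lext_lext lext_commute[of _ _ x])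

lemma op3_bvec [simp]: "op3 T (bvec a) (bvec b) (bvec c) = (T (a, (b, c)) :: 'a \<Rightarrow> 'k::comm_ring_1)"
  by (simp add: op3_def)

lemma op3_eq_lext:
  "fsupp x \<Longrightarrow> fsupp y \<Longrightarrow> fsupp z \<Longrightarrow>
     op3 T x y z = lext (\<lambda>a. lext (\<lambda>b. lext (\<lambda>c. T (a, (b, c))) z) y) x"
  unfolding op3_def by (simp add: lext_tens)

lemma fsupp_op3:
  "(\<And>w. fsupp (T w)) \<Longrightarrow> fsupp x \<Longrightarrow> fsupp y \<Longrightarrow> fsupp z \<Longrightarrow> fsupp (op3 T x y z)"
  unfolding op3_def by (intro fsupp_lext) auto

definition ract ::
    "('a \<times> ('a \<times> 'a) \<Rightarrow> 'a \<Rightarrow> 'k::comm_ring_1) \<Rightarrow> 'a \<times> 'a \<Rightarrow> ('a \<Rightarrow> 'k) \<Rightarrow> 'a \<Rightarrow> 'k"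
  where "ract T w x = lext (\<lambda>a. T (a, w)) x"

lemma op3_bvec_bvec: "fsupp x \<Longrightarrow> op3 T x (bvec p) (bvec q) = ract T (p, q) x"
  by (simp add: op3_def lext_tens ract_def)

definition ract_ext ::
    "('a \<times> ('a \<times> 'a) \<Rightarrow> 'a \<Rightarrow> 'k::comm_ring_1) \<Rightarrow> ('a \<times> 'a \<Rightarrow> 'k) \<Rightarrow> ('a \<Rightarrow> 'k) \<Rightarrow> 'a \<Rightarrow> 'k"
  where "ract_ext T Y x = lext (\<lambda>w. ract T w x) Y"

lemma ract_ext_tens: "fsupp x \<Longrightarrow> fsupp y \<Longrightarrow> fsupp z \<Longrightarrow> ract_ext T (tens y z) x = op3 T x y z"
  by (simp add: ract_ext_def ract_def op3_def lext_tens[of x "tens y z"] lext_commute[of _ x])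

lemma ract_ext_lext:
  "fsupp Y \<Longrightarrow> (\<And>y. fsupp (f y)) \<Longrightarrow> ract_ext T (lext f Y) x = lext (\<lambda>y. ract_ext T (f y) x) Y"
  by (simp add: ract_ext_def lext_lext)

section \<open>Coalgebras in Sweedler form\<close>

lemma coalgebra_fsupp: "coalgebra D e \<Longrightarrow> fsupp (D a)"
  by (simp add: coalgebra_def linmap_def)

lemma fsupp_tmap:
  "fsupp v \<Longrightarrow> (\<And>a. fsupp (f a)) \<Longrightarrow> (\<And>b. fsupp (g b)) \<Longrightarrow> fsupp (tmap f g v)"
  unfolding tmap_def by (rule fsupp_lext) (auto simp: split_beta)

lemma lext_tmap_left:
  assumes "fsupp v" "\<And>a. fsupp (D a)"
  shows "lext G (tmap D bvec v) = lext (\<lambda>(p, q). lext (\<lambda>r. G (r, q)) (D p)) v"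
  unfolding tmap_def using assms
  by (subst lext_lext) (auto simp: lext_tens split_beta split_beta' intro!: lext_cong)

lemma lext_tmap_right:
  assumes "fsupp v" "\<And>a. fsupp (D a)"
  shows "lext G (tmap bvec D v) = lext (\<lambda>(p, q). lext (\<lambda>r. G (p, r)) (D q)) v"
  unfolding tmap_def using assms
  by (subst lext_lext) (auto simp: lext_tens split_beta split_beta' intro!: lext_cong)

text \<open>Sweedler sums are iterated linear extensions: \<open>lext (\<lambda>(p, q). F p q) (D w)\<close> is
  \<open>F w_(1) w_(2)\<close>.  The coalgebra axioms are restated in this form for arbitrary
  vector-valued \<open>F\<close>, which is how they are used inside nested sums.\<close>

lemma coalgebra_coassoc:
  assumes "coalgebra D e"
  shows "lext (\<lambda>(p, q). lext (\<lambda>(r, s). G r s q) (D p)) (D w)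
       = lext (\<lambda>(p, q). lext (\<lambda>(r, s). G p r s) (D q)) (D w)"
proof -
  have fD: "\<And>a. fsupp (D a)" using assms by (rule coalgebra_fsupp)
  have ax: "tmap D bvec (D w) = (\<lambda>x. tmap bvec D (D w) (fst (fst x), snd (fst x), snd x))"
    using assms unfolding coalgebra_def by (auto simp: split_beta)
  have "lext (\<lambda>(p, q). lext (\<lambda>(r, s). G r s q) (D p)) (D w)
      = lext (\<lambda>((r, s), q). G r s q) (tmap D bvec (D w))"
    by (simp add: lext_tmap_left fD split_beta split_beta')
  also have "\<dots> = lext (\<lambda>(p, (r, s)). G p r s) (tmap bvec D (D w))"
    unfolding ax
    by (subst lext_reindex[where g = "\<lambda>(a, b, c). ((a, b), c)"]) (auto simp: split_beta split_beta')
  also have "\<dots> = lext (\<lambda>(p, q). lext (\<lambda>(r, s). G p r s) (D q)) (D w)"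
    by (simp add: lext_tmap_right fD split_beta split_beta')
  finally show ?thesis .
qed

lemma coalgebra_counit_left:
  assumes "coalgebra D e"
  shows "lext (\<lambda>(p, q) c. e p * F q c) (D w) = F w"
proof -
  have "F w = lext F (lext (\<lambda>(x, y) c. e x * bvec y c) (D w))"
    using assms by (simp add: coalgebra_def)
  also have "\<dots> = lext (\<lambda>(p, q) c. e p * F q c) (D w)"
    using assms by (subst lext_lext)
      (auto simp: coalgebra_fsupp fsupp_smult split_beta lext_smult_bvec intro!: lext_cong)
  finally show ?thesis by simp
qed

lemma coalgebra_counit_right:
  assumes "coalgebra D e"
  shows "lext (\<lambda>(p, q) c. e q * F p c) (D w) = F w"
proof -
  have "F w = lext F (lext (\<lambda>(x, y) c. bvec x c * e y) (D w))"
    using assms by (simp add: coalgebra_def)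
  also have "\<dots> = lext (\<lambda>(p, q) c. e q * F p c) (D w)"
    using assms by (subst lext_lext)
      (auto simp: coalgebra_fsupp fsupp_smult split_beta lext_smult_bvec mult.commute
        intro!: lext_cong)
  finally show ?thesis by simp
qed

lemma coalgebra_counit_lfun:
  assumes "coalgebra D e"
  shows "lfun (\<lambda>(p, q). e p * h q) (D w) = h w"
proof -
  have "lext (\<lambda>(p, q) (_ :: unit). e p * h q) (D w) = (\<lambda>_. h w)"
    using coalgebra_counit_left[OF assms, of "\<lambda>q _. h q" w] by (simp add: split_beta')
  then show ?thesis
    by (simp add: lfun_eq_lext split_beta')
qed

lemma cocommutative_swap:
  assumes "cocommutative D"
  shows "lext (\<lambda>(p, q). F p q) (D w) = lext (\<lambda>(p, q). F q p) (D w)"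
proof -
  have "D w = (\<lambda>x. D w (snd x, fst x))"
    using assms by (auto simp: cocommutative_def)
  then have "lext (\<lambda>(p, q). F p q) (D w) = lext (\<lambda>(p, q). F p q) (\<lambda>x. D w (snd x, fst x))"
    by simp
  also have "\<dots> = lext (\<lambda>(p, q). F q p) (D w)"
    by (subst lext_reindex[where g = "\<lambda>(a, b). (b, a)"]) (auto simp: split_beta split_beta')
  finally show ?thesis .
qed

lemma coalgebraI:
  assumes fD: "\<And>a. fsupp (D a)"
    and coassoc: "\<And>w (G :: 'a \<Rightarrow> 'a \<Rightarrow> 'a \<Rightarrow> ('a \<times> 'a) \<times> 'a \<Rightarrow> 'k::comm_ring_1).
      lext (\<lambda>(p, q). lext (\<lambda>(r, s). G r s q) (D p)) (D w)
      = lext (\<lambda>(p, q). lext (\<lambda>(r, s). G p r s) (D q)) (D w)"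
    and counit_left: "\<And>w (F :: 'a \<Rightarrow> 'a \<Rightarrow> 'k). lext (\<lambda>(p, q) c. e p * F q c) (D w) = F w"
    and counit_right: "\<And>w (F :: 'a \<Rightarrow> 'a \<Rightarrow> 'k). lext (\<lambda>(p, q) c. e q * F p c) (D w) = F w"
  shows "coalgebra D e"
  unfolding coalgebra_def
proof (intro conjI allI)
  show "linmap D" using fD by (simp add: linmap_def)
next
  fix a x y z
  have "tmap D bvec (D a) ((x, y), z) = lext bvec (tmap D bvec (D a)) ((x, y), z)"
    by (simp add: lext_bvec_id fsupp_tmap fD)
  also have "\<dots> = lext (\<lambda>(p, q). lext (\<lambda>(r, s). bvec ((r, s), q)) (D p)) (D a) ((x, y), z)"
    by (simp add: lext_tmap_left fD split_beta')
  also have "\<dots> = lext (\<lambda>(p, q). lext (\<lambda>(r, s). bvec ((p, r), s)) (D q)) (D a) ((x, y), z)"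
    by (simp only: coassoc[of _ a])
  also have "\<dots> = lext (\<lambda>(p, q). lext (\<lambda>r. bvec (p, r)) (D q)) (D a) (x, (y, z))"
    by (simp add: lext_def bvec_def split_beta prod_eq_iff)
  also have "\<dots> = lext bvec (tmap bvec D (D a)) (x, (y, z))"
    by (simp add: lext_tmap_right fD split_beta')
  also have "\<dots> = tmap bvec D (D a) (x, (y, z))"
    by (simp add: lext_bvec_id fsupp_tmap fD)
  finally show "tmap D bvec (D a) ((x, y), z) = tmap bvec D (D a) (x, y, z)" .
next
  fix a
  show "lext (\<lambda>(x, y) c. e x * bvec y c) (D a) = bvec a"
    by (rule counit_left)
  show "lext (\<lambda>(x, y) c. bvec x c * e y) (D a) = bvec a"
    using counit_right[of bvec a] by (simp add: mult.commute)
qed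

lemma lext_tcD:
  assumes "fsupp (D1 a)" "fsupp (D2 b)"
  shows "lext F (tcD D1 D2 (a, b))
       = lext (\<lambda>(a1, a2). lext (\<lambda>(b1, b2). F ((a1, b1), (a2, b2))) (D2 b)) (D1 a)"
proof -
  have "tcD D1 D2 (a, b)
      = (\<lambda>x. tens (D1 a) (D2 b) ((fst (fst x), fst (snd x)), (snd (fst x), snd (snd x))))"
    by (auto simp: tcD_def tens_def split_beta)
  then show ?thesis
    by (simp, subst lext_reindex[where g = "\<lambda>((a1, a2), (b1, b2)). ((a1, b1), (a2, b2))"])
      (auto simp: lext_tens assms split_beta split_beta')
qed

lemma fsupp_tcD:
  assumes "fsupp (D1 a)" "fsupp (D2 b)"
  shows "fsupp (tcD D1 D2 (a, b))"
proof -
  let ?h = "\<lambda>((a1, a2), (b1, b2)). ((a1, b1), (a2, b2))"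
  have "{x. tcD D1 D2 (a, b) x \<noteq> 0} \<subseteq> ?h ` ({x. D1 a x \<noteq> 0} \<times> {x. D2 b x \<noteq> 0})"
  proof
    fix x assume x: "x \<in> {x. tcD D1 D2 (a, b) x \<noteq> 0}"
    obtain a1 b1 a2 b2 where "x = ((a1, b1), (a2, b2))" by (metis prod.collapse)
    with x show "x \<in> ?h ` ({x. D1 a x \<noteq> 0} \<times> {x. D2 b x \<noteq> 0})"
      by (auto simp: tcD_def intro!: image_eqI[where x = "((a1, a2), (b1, b2))"])
  qed
  moreover have "finite (?h ` ({x. D1 a x \<noteq> 0} \<times> {x. D2 b x \<noteq> 0}))"
    using assms by (simp add: fsupp_def)
  ultimately show ?thesis
    unfolding fsupp_def by (rule finite_subset)
qed

lemma tcD_coassoc: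
  assumes c1: "coalgebra D1 e1" and c2: "coalgebra D2 e2"
  shows "lext (\<lambda>(p, q). lext (\<lambda>(r, s). G r s q) (tcD D1 D2 p)) (tcD D1 D2 (a, b))
       = lext (\<lambda>(p, q). lext (\<lambda>(r, s). G p r s) (tcD D1 D2 q)) (tcD D1 D2 (a, b))"
proof -
  have f1: "\<And>a. fsupp (D1 a)" and f2: "\<And>b. fsupp (D2 b)"
    using c1 c2 by (auto simp: coalgebra_fsupp)
  have "lext (\<lambda>(p, q). lext (\<lambda>(r, s). G r s q) (tcD D1 D2 p)) (tcD D1 D2 (a, b))
      = lext (\<lambda>(a1, a2). lext (\<lambda>(b1, b2). lext (\<lambda>(a11, a12). lext (\<lambda>(b11, b12).
          G (a11, b11) (a12, b12) (a2, b2)) (D2 b1)) (D1 a1)) (D2 b)) (D1 a)"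
    by (simp add: lext_tcD f1 f2 split_beta' split_beta)
  also have "\<dots> = lext (\<lambda>(a1, a2). lext (\<lambda>(a11, a12). lext (\<lambda>(b1, b2). lext (\<lambda>(b11, b12).
          G (a11, b11) (a12, b12) (a2, b2)) (D2 b1)) (D2 b)) (D1 a1)) (D1 a)"
    by (simp only: split_beta' lext_commute[of _ "D1 _"])
  also have "\<dots> = lext (\<lambda>(a1, a2). lext (\<lambda>(a11, a12). lext (\<lambda>(b1, b2). lext (\<lambda>(b21, b22).
          G (a11, b1) (a12, b21) (a2, b22)) (D2 b2)) (D2 b)) (D1 a1)) (D1 a)"
    by (subst coalgebra_coassoc[OF c2]) (rule refl)
  also have "\<dots> = lext (\<lambda>(a1, a2). lext (\<lambda>(a21, a22). lext (\<lambda>(b1, b2). lext (\<lambda>(b21, b22).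
          G (a1, b1) (a21, b21) (a22, b22)) (D2 b2)) (D2 b)) (D1 a2)) (D1 a)"
    by (rule coalgebra_coassoc[OF c1])
  also have "\<dots> = lext (\<lambda>(a1, a2). lext (\<lambda>(b1, b2). lext (\<lambda>(a21, a22). lext (\<lambda>(b21, b22).
          G (a1, b1) (a21, b21) (a22, b22)) (D2 b2)) (D1 a2)) (D2 b)) (D1 a)"
    by (simp only: split_beta' lext_commute[of _ "D2 _"])
  also have "\<dots> = lext (\<lambda>(p, q). lext (\<lambda>(r, s). G p r s) (tcD D1 D2 q)) (tcD D1 D2 (a, b))"
    by (simp add: lext_tcD f1 f2 split_beta' split_beta)
  finally show ?thesis .
qed

lemma coalgebra_tcD:
  fixes D1 :: "'a \<Rightarrow> 'a \<times> 'a \<Rightarrow> 'k::comm_ring_1" and D2 :: "'b \<Rightarrow> 'b \<times> 'b \<Rightarrow> 'k"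
  assumes c1: "coalgebra D1 e1" and c2: "coalgebra D2 e2"
  shows "coalgebra (tcD D1 D2) (tce e1 e2)"
proof (rule coalgebraI)
  have f1: "\<And>a. fsupp (D1 a)" and f2: "\<And>b. fsupp (D2 b)"
    using c1 c2 by (auto simp: coalgebra_fsupp)
  show "\<And>w. fsupp (tcD D1 D2 w)"
    by (auto simp: fsupp_tcD f1 f2)
  fix w :: "'a \<times> 'b"
  obtain a b where w: "w = (a, b)" by (cases w)
  show "lext (\<lambda>(p, q). lext (\<lambda>(r, s). G r s q) (tcD D1 D2 p)) (tcD D1 D2 w)
      = lext (\<lambda>(p, q). lext (\<lambda>(r, s). G p r s) (tcD D1 D2 q)) (tcD D1 D2 w)" for G
    unfolding w by (rule tcD_coassoc[OF c1 c2])
  show "lext (\<lambda>(p, q) c. tce e1 e2 p * F q c) (tcD D1 D2 w) = F w" for F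
  proof -
    have "lext (\<lambda>(p, q) c. tce e1 e2 p * F q c) (tcD D1 D2 w)
        = lext (\<lambda>(a1, a2) c. e1 a1 * lext (\<lambda>(b1, b2) c. e2 b1 * F (a2, b2) c) (D2 b) c) (D1 a)"
      by (simp add: w lext_tcD f1 f2 split_beta' tce_def mult.assoc lext_const_mult[symmetric])
    then show ?thesis
      by (simp add: w coalgebra_counit_left[OF c2, where F = "\<lambda>b2. F (_, b2)"]
          coalgebra_counit_left[OF c1, where F = "\<lambda>a2. F (a2, b)"])
  qed
  show "lext (\<lambda>(p, q) c. tce e1 e2 q * F p c) (tcD D1 D2 w) = F w" for F
  proof -
    have "lext (\<lambda>(p, q) c. tce e1 e2 q * F p c) (tcD D1 D2 w)
        = lext (\<lambda>(a1, a2) c. e1 a2 * lext (\<lambda>(b1, b2) c. e2 b2 * F (a1, b1) c) (D2 b) c) (D1 a)"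
      by (simp add: w lext_tcD f1 f2 split_beta' tce_def mult.assoc lext_const_mult[symmetric])
    then show ?thesis
      by (simp add: w coalgebra_counit_right[OF c2, where F = "\<lambda>b1. F (_, b1)"]
          coalgebra_counit_right[OF c1, where F = "\<lambda>a1. F (a1, b)"])
  qed
qed

lemma cocommutative_tcD:
  "cocommutative D1 \<Longrightarrow> cocommutative D2 \<Longrightarrow> cocommutative (tcD D1 D2)"
  unfolding cocommutative_def tcD_def by auto

lemma coalgebra_coassoc_middle:
  assumes "coalgebra D e"
  shows "lext (\<lambda>(p, q). lext (\<lambda>(a, b). lext (\<lambda>(c, d). F a b c d) (D q)) (D p)) (D w)
       = lext (\<lambda>(a, q). lext (\<lambda>(r, d). lext (\<lambda>(b, c). F a b c d) (D r)) (D q)) (D w)"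
proof -
  have "lext (\<lambda>(p, q). lext (\<lambda>(a, b). lext (\<lambda>(c, d). F a b c d) (D q)) (D p)) (D w)
      = lext (\<lambda>(a, q). lext (\<lambda>(b, r). lext (\<lambda>(c, d). F a b c d) (D r)) (D q)) (D w)"
    by (rule coalgebra_coassoc[OF assms])
  also have "\<dots> = lext (\<lambda>(a, q). lext (\<lambda>(r, d). lext (\<lambda>(b, c). F a b c d) (D r)) (D q)) (D w)"
    by (rule lext_arg_cong, simp add: split_beta, rule coalgebra_coassoc[OF assms, symmetric])
  finally show ?thesis .
qed

lemma cocommutative_middle_swap:
  assumes "coalgebra D e" and "cocommutative D"
  shows "lext (\<lambda>(p, q). lext (\<lambda>(a, b). lext (\<lambda>(c, d). F a b c d) (D q)) (D p)) (D w)
       = lext (\<lambda>(p, q). lext (\<lambda>(a, b). lext (\<lambda>(c, d). F a c b d) (D q)) (D p)) (D w)"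
  unfolding coalgebra_coassoc_middle[OF assms(1)]
  by (rule lext_arg_cong, simp add: split_beta, rule lext_arg_cong, simp add: split_beta,
      rule cocommutative_swap[OF assms(2)])

lemma coalg_hom_comult:
  assumes h: "coalg_hom D1 e1 D2 e2 f" and fD2: "\<And>x. fsupp (D2 x)" and fD1: "fsupp (D1 a)"
  shows "lext (\<lambda>x. lext G (D2 x)) (f a)
       = lext (\<lambda>(a1, a2). lext (\<lambda>x1. lext (\<lambda>x2. G (x1, x2)) (f a2)) (f a1)) (D1 a)"
proof -
  have ff: "\<And>b. fsupp (f b)" using h by (simp add: coalg_hom_def linmap_def)
  have "lext (\<lambda>x. lext G (D2 x)) (f a) = lext G (lext D2 (f a))"
    by (rule lext_lext[symmetric]) (auto simp: ff fD2)
  also have "\<dots> = lext G (tmap f f (D1 a))"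
    using h by (simp add: coalg_hom_def)
  also have "\<dots> = lext (\<lambda>(a1, a2). lext (\<lambda>x1. lext (\<lambda>x2. G (x1, x2)) (f a2)) (f a1)) (D1 a)"
    unfolding tmap_def
    by (subst lext_lext) (auto simp: fD1 ff lext_tens split_beta intro!: lext_cong)
  finally show ?thesis .
qed

lemma lext_Delta2:
  assumes "\<And>a. fsupp (D a)" "fsupp u"
  shows "lext F (Delta2 D u)
       = lext (\<lambda>w. lext (\<lambda>(p1, p'). lext (\<lambda>(p2, p3). F (p1, (p2, p3))) (D p')) (D w)) u"
proof -
  have "fsupp (lext D u)" using assms by (intro fsupp_lext) auto
  then show ?thesis
    unfolding Delta2_def using assms by (simp add: lext_tmap_right lext_lext split_beta')
qed

lemma fsupp_Delta2: "(\<And>a. fsupp (D a)) \<Longrightarrow> fsupp u \<Longrightarrow> fsupp (Delta2 D u)"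
  unfolding Delta2_def by (intro fsupp_tmap fsupp_lext) auto

lemma cocommutative_Delta2_swap:
  assumes "\<And>a. fsupp (D a)" "fsupp u" "cocommutative D"
  shows "lext F (Delta2 D u) = lext (\<lambda>(p1, (p2, p3)). F (p1, (p3, p2))) (Delta2 D u)"
  unfolding lext_Delta2[OF assms(1, 2)]
  by (simp only: cocommutative_swap[OF assms(3), of "\<lambda>p2 p3. F (_, (p2, p3))"])
    (simp add: split_beta)

lemma self_distrib_of_basis:
  assumes fK: "\<And>x. fsupp (K x)" and fD: "\<And>x. fsupp (D x)"
    and basis: "\<And>a b c. lext (\<lambda>z. K (z, c)) (K (a, b))
                       = lext (\<lambda>(p, q). op2 K (K (a, p)) (K (b, q))) (D c)"
    and u: "fsupp u" and v: "fsupp v" and w: "fsupp w"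
  shows "op2 K (op2 K u v) w
       = lext (\<lambda>(p, q). op2 K (op2 K u (bvec p)) (op2 K v (bvec q))) (lext D w)"
proof -
  have pq: "op2 K (op2 K u (bvec p)) (op2 K v (bvec q))
          = lext (\<lambda>a. lext (\<lambda>b. op2 K (K (a, p)) (K (b, q))) v) u" for p q
    using u v fK
    by (simp add: op2_bvec_right op2_lext_left op2_lext_right fsupp_lext lext_commute[of _ v])
  have "op2 K (op2 K u v) w = lext (\<lambda>a. lext (\<lambda>b. lext (\<lambda>c. lext (\<lambda>z. K (z, c)) (K (a, b))) w) v) u"
    using u v w fK
    by (simp add: op2_eq_lext fsupp_op2 lext_lext fsupp_lext lext_commute[of _ w])
  also have "\<dots> = lext (\<lambda>a. lext (\<lambda>b. lext (\<lambda>c.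
      lext (\<lambda>(p, q). op2 K (K (a, p)) (K (b, q))) (D c)) w) v) u"
    by (simp only: basis)
  also have "\<dots> = lext (\<lambda>c. lext (\<lambda>(p, q). lext (\<lambda>a. lext (\<lambda>b.
      op2 K (K (a, p)) (K (b, q))) v) u) (D c)) w"
    by (simp only: lext_commute[of _ w] lext_commute[of _ "D _"]) (simp add: split_beta')
  also have "\<dots> = lext (\<lambda>(p, q). op2 K (op2 K u (bvec p)) (op2 K v (bvec q))) (lext D w)"
    using w fD by (simp add: lext_lext pq)
  finally show ?thesis .
qed

section \<open>The linear shelf \<open>lhdT D T\<close>\<close>

locale cocomm_trilinear_shelf =
  fixes D :: "'a \<Rightarrow> 'a \<times> 'a \<Rightarrow> 'k::comm_ring_1" and e :: "'a \<Rightarrow> 'k"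
    and T :: "'a \<times> ('a \<times> 'a) \<Rightarrow> 'a \<Rightarrow> 'k"
  assumes cocommutative: "cocommutative D"
    and trilinear_shelf: "trilinear_shelf D e T"
begin

abbreviation "DD \<equiv> tcD D D"
abbreviation "lhd \<equiv> lhdT D T"

lemma coalgebra: "coalgebra D e"
  using trilinear_shelf by (simp add: trilinear_shelf_def)

lemma coalg_hom_T: "coalg_hom (tcD D (tcD D D)) (tce e (tce e e)) D e T"
  using trilinear_shelf by (simp add: trilinear_shelf_def)

lemma fsupp_D [simp]: "fsupp (D a)"
  using coalgebra by (rule coalgebra_fsupp)

lemma fsupp_T [simp]: "fsupp (T x)"
  using coalg_hom_T unfolding coalg_hom_def linmap_def by blast

lemma fsupp_DD [simp]: "fsupp (DD w)"
  by (cases w) (simp add: fsupp_tcD)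

lemma coalgebra_DD: "coalgebra DD (tce e e)"
  using coalgebra coalgebra by (rule coalgebra_tcD)

lemma cocommutative_DD: "cocommutative DD"
  using cocommutative cocommutative by (rule cocommutative_tcD)

lemma lext_DD:
  "lext F (DD (m, n)) = lext (\<lambda>(m1, m2). lext (\<lambda>(n1, n2). F ((m1, n1), (m2, n2))) (D n)) (D m)"
  by (simp add: lext_tcD)

lemma lhdT_eq: "lhd ((u, v), w) = lext (\<lambda>(w1, w2). tens (T (u, w1)) (T (v, w2))) (DD w)"
  by (cases w) (simp add: lhdT_def lext_DD lext_tens split_beta split_beta')

lemma fsupp_lhdT [simp]: "fsupp (lhd X)"
  by (cases X) (auto simp: lhdT_eq split_beta intro!: fsupp_lext)

lemma lext_lhdT_tens:
  assumes "fsupp x" "fsupp y"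
  shows "lext (\<lambda>z. lhd (z, W)) (tens x y)
       = lext (\<lambda>(w1, w2). tens (ract T w1 x) (ract T w2 y)) (DD W)"
proof -
  have "lext (\<lambda>z. lhd (z, W)) (tens x y)
      = lext (\<lambda>a. lext (\<lambda>b. lext (\<lambda>(w1, w2). tens (T (a, w1)) (T (b, w2))) (DD W)) y) x"
    by (simp add: lext_tens assms lhdT_eq)
  also have "\<dots> = lext (\<lambda>(w1, w2). lext (\<lambda>a. lext (\<lambda>b. tens (T (a, w1)) (T (b, w2))) y) x) (DD W)"
    by (simp only: split_beta' lext_commute[of _ "DD W"])
  also have "\<dots> = lext (\<lambda>(w1, w2). tens (ract T w1 x) (ract T w2 y)) (DD W)"
    by (simp add: split_beta' ract_def tens_lext_left tens_lext_right lext_commute[of _ y])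
  finally show ?thesis .
qed

lemma T_comult:
  "lext (\<lambda>x. lext G (D x)) (T (a, w))
 = lext (\<lambda>(a1, a2). lext (\<lambda>(w1, w2).
     lext (\<lambda>x1. lext (\<lambda>x2. G (x1, x2)) (T (a2, w2))) (T (a1, w1))) (DD w)) (D a)"
  by (cases w) (simp add: coalg_hom_comult[OF coalg_hom_T] lext_tcD fsupp_tcD split_beta')

lemma T_tens_comult:
  "lext (\<lambda>x. lext (\<lambda>y. lext (\<lambda>(x1, x2). lext (\<lambda>(y1, y2). G x1 x2 y1 y2)
      (D y)) (D x)) (T (v, w2))) (T (u, w1))
 = lext (\<lambda>(u1, u2). lext (\<lambda>(v1, v2). lext (\<lambda>(w11, w12). lext (\<lambda>(w21, w22).
     lext (\<lambda>x1. lext (\<lambda>x2. lext (\<lambda>y1. lext (\<lambda>y2. G x1 x2 y1 y2)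
       (T (v2, w22))) (T (v1, w21))) (T (u2, w12))) (T (u1, w11)))
     (DD w2)) (DD w1)) (D v)) (D u)"
  (is "?L = ?R")
proof -
  have "?L = lext (\<lambda>x. lext (\<lambda>(x1, x2). lext (\<lambda>y. lext (\<lambda>(y1, y2). G x1 x2 y1 y2)
      (D y)) (T (v, w2))) (D x)) (T (u, w1))"
    by (simp only: split_beta' lext_commute[where x = "T (v, w2)"])
  also have "\<dots> = lext (\<lambda>(u1, u2). lext (\<lambda>(w11, w12). lext (\<lambda>x1. lext (\<lambda>x2.
      lext (\<lambda>(v1, v2). lext (\<lambda>(w21, w22). lext (\<lambda>y1. lext (\<lambda>y2. G x1 x2 y1 y2)
        (T (v2, w22))) (T (v1, w21))) (DD w2)) (D v))
      (T (u2, w12))) (T (u1, w11))) (DD w1)) (D u)"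
    by (simp only: T_comult split_beta' fst_conv snd_conv)
  also have "\<dots> = ?R"
    by (simp only: split_beta' lext_commute[of _ "D v"], simp only: lext_commute[of _ "DD w2"])
  finally show ?thesis .
qed

lemma lhdT_comult_expand:
  "lext (\<lambda>z. lext G (DD z)) (lhd ((u, v), W))
 = lext (\<lambda>(u1, u2). lext (\<lambda>(v1, v2). lext (\<lambda>(w1, w2).
     lext (\<lambda>(a, b). lext (\<lambda>(c, d).
       lext (\<lambda>x1. lext (\<lambda>x2. lext (\<lambda>y1. lext (\<lambda>y2. G ((x1, y1), (x2, y2)))
         (T (v2, d))) (T (v1, b))) (T (u2, c))) (T (u1, a)))
     (DD w2)) (DD w1)) (DD W)) (D v)) (D u)"
proof -
  have "lext (\<lambda>z. lext G (DD z)) (lhd ((u, v), W))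
      = lext (\<lambda>(w1, w2). lext (\<lambda>x. lext (\<lambda>y. lext (\<lambda>(x1, x2). lext (\<lambda>(y1, y2).
          G ((x1, y1), (x2, y2))) (D y)) (D x)) (T (v, w2))) (T (u, w1))) (DD W)"
    by (simp add: lhdT_eq lext_lext lext_tens lext_DD split_beta split_beta')
  also have "\<dots> = lext (\<lambda>(u1, u2). lext (\<lambda>(v1, v2). lext (\<lambda>(w1, w2).
      lext (\<lambda>(w11, w12). lext (\<lambda>(w21, w22).
        lext (\<lambda>x1. lext (\<lambda>x2. lext (\<lambda>y1. lext (\<lambda>y2. G ((x1, y1), (x2, y2)))
          (T (v2, w22))) (T (v1, w21))) (T (u2, w12))) (T (u1, w11)))
      (DD w2)) (DD w1)) (DD W)) (D v)) (D u)"
    by (simp only: T_tens_comult, simp only: split_beta' lext_commute[of _ "D v"],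
        simp only: lext_commute[of _ "D u"])
  also have "\<dots> = lext (\<lambda>(u1, u2). lext (\<lambda>(v1, v2). lext (\<lambda>(w1, w2).
      lext (\<lambda>(a, b). lext (\<lambda>(c, d).
        lext (\<lambda>x1. lext (\<lambda>x2. lext (\<lambda>y1. lext (\<lambda>y2. G ((x1, y1), (x2, y2)))
          (T (v2, d))) (T (v1, b))) (T (u2, c))) (T (u1, a)))
      (DD w2)) (DD w1)) (DD W)) (D v)) (D u)"
    by (subst cocommutative_middle_swap[OF coalgebra_DD cocommutative_DD]) (rule refl)
  finally show ?thesis .
qed

lemma lhdT_comult:
  "lext (\<lambda>z. lext G (DD z)) (lhd ((u, v), W))
 = lext (\<lambda>(u1, u2). lext (\<lambda>(v1, v2). lext (\<lambda>(W1, W2).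
     lext (\<lambda>z1. lext (\<lambda>z2. G (z1, z2)) (lhd ((u2, v2), W2))) (lhd ((u1, v1), W1)))
   (DD W)) (D v)) (D u)"
proof -
  have "lext (\<lambda>z. lext G (DD z)) (lhd ((u, v), W))
      = lext (\<lambda>(u1, u2). lext (\<lambda>(v1, v2). lext (\<lambda>(w1, w2).
          lext (\<lambda>(a, b). lext (\<lambda>(c, d).
            lext (\<lambda>x1. lext (\<lambda>y1. lext (\<lambda>x2. lext (\<lambda>y2. G ((x1, y1), (x2, y2)))
              (T (v2, d))) (T (u2, c))) (T (v1, b))) (T (u1, a)))
          (DD w2)) (DD w1)) (DD W)) (D v)) (D u)"
    unfolding lhdT_comult_expand by (simp only: split_beta', (rule lext_arg_cong lext_commute)+)
  also have "\<dots> = lext (\<lambda>(u1, u2). lext (\<lambda>(v1, v2). lext (\<lambda>(w1, w2).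
      lext (\<lambda>(a, b). lext (\<lambda>x1. lext (\<lambda>(c, d).
        lext (\<lambda>y1. lext (\<lambda>x2. lext (\<lambda>y2. G ((x1, y1), (x2, y2)))
          (T (v2, d))) (T (u2, c))) (T (v1, b)))
      (DD w2)) (T (u1, a))) (DD w1)) (DD W)) (D v)) (D u)"
    by (simp only: split_beta', (rule lext_arg_cong lext_commute)+)
  also have "\<dots> = lext (\<lambda>(u1, u2). lext (\<lambda>(v1, v2). lext (\<lambda>(w1, w2).
      lext (\<lambda>(a, b). lext (\<lambda>x1. lext (\<lambda>y1. lext (\<lambda>(c, d).
        lext (\<lambda>x2. lext (\<lambda>y2. G ((x1, y1), (x2, y2)))
          (T (v2, d))) (T (u2, c)))
      (DD w2)) (T (v1, b))) (T (u1, a))) (DD w1)) (DD W)) (D v)) (D u)"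
    by (simp only: split_beta', (rule lext_arg_cong lext_commute)+)
  also have "\<dots> = lext (\<lambda>(u1, u2). lext (\<lambda>(v1, v2). lext (\<lambda>(W1, W2).
      lext (\<lambda>z1. lext (\<lambda>z2. G (z1, z2)) (lhd ((u2, v2), W2))) (lhd ((u1, v1), W1)))
    (DD W)) (D v)) (D u)"
    by (simp add: lhdT_eq lext_lext lext_tens split_beta split_beta')
  finally show ?thesis .
qed

lemma lfun_T: "lfun e (T x) = tce e (tce e e) x"
  using coalg_hom_T unfolding coalg_hom_def by (metis prod.collapse)

lemma coalg_hom_lhdT: "coalg_hom (tcD DD DD) (tce (tce e e) (tce e e)) DD (tce e e) lhd"
  unfolding coalg_hom_def
proof (intro conjI allI)
  show "linmap lhd" by (simp add: linmap_def)
next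
  fix X :: "('a \<times> 'a) \<times> ('a \<times> 'a)"
  obtain u v W where X: "X = ((u, v), W)" by (metis prod.collapse)
  have "lext DD (lhd X) = lext (\<lambda>z. lext bvec (DD z)) (lhd X)"
    by (simp add: lext_bvec_id)
  also have "\<dots> = lext (\<lambda>(u1, u2). lext (\<lambda>(v1, v2). lext (\<lambda>(W1, W2).
        lext (\<lambda>z1. lext (\<lambda>z2. bvec (z1, z2)) (lhd ((u2, v2), W2))) (lhd ((u1, v1), W1)))
      (DD W)) (D v)) (D u)"
    unfolding X by (rule lhdT_comult)
  also have "\<dots> = lext (\<lambda>(u1, u2). lext (\<lambda>(v1, v2). lext (\<lambda>(W1, W2).
        tens (lhd ((u1, v1), W1)) (lhd ((u2, v2), W2))) (DD W)) (D v)) (D u)"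
    by (simp add: lext_tens[symmetric] lext_bvec_id split_beta')
  also have "\<dots> = tmap lhd lhd (tcD DD DD X)"
    unfolding X tmap_def
    by (simp add: lext_tcD fsupp_tcD split_beta' lext_DD)
  finally show "lext DD (lhd X) = tmap lhd lhd (tcD DD DD X)" .
next
  fix X :: "('a \<times> 'a) \<times> ('a \<times> 'a)"
  obtain u v W where X: "X = ((u, v), W)" by (metis prod.collapse)
  have "lfun (tce e e) (lhd X)
      = lfun (\<lambda>(w1, w2). lfun (tce e e) (tens (T (u, w1)) (T (v, w2)))) (DD W)"
    unfolding X lhdT_eq by (subst lfun_lext) (auto simp: split_beta')
  also have "\<dots> = lfun (\<lambda>(w1, w2). tce e e w1 * (e u * e v * tce e e w2)) (DD W)"
    by (simp only: lfun_tens fsupp_T lfun_T split_beta') (simp add: tce_def split_beta mult_ac)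
  also have "\<dots> = e u * e v * tce e e W"
    by (rule coalgebra_counit_lfun[OF coalgebra_DD])
  also have "\<dots> = tce (tce e e) (tce e e) X" by (simp add: X tce_def)
  finally show "lfun (tce e e) (lhd X) = tce (tce e e) (tce e e) X" .
qed

lemma op3_self_distrib:
  assumes "fsupp x" "fsupp y" "fsupp z" "fsupp u" "fsupp v"
  shows "op3 T (op3 T x y z) u v
       = lext (\<lambda>((p1, (p2, p3)), (q1, (q2, q3))).
           op3 T (op3 T x (bvec p1) (bvec q1)) (op3 T y (bvec p2) (bvec q2))
             (op3 T z (bvec p3) (bvec q3)))
         (tens (Delta2 D u) (Delta2 D v))"
  using trilinear_shelf assms unfolding trilinear_shelf_def by blast

lemma ract_T_eq:
  "ract T w (T (a, V)) = lext (\<lambda>(w1, w2). ract_ext T (lhd (V, w2)) (T (a, w1))) (DD w)"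
proof -
  obtain p q m n where w: "w = (p, q)" and V: "V = (m, n)" by (cases w, cases V)
  have "ract T (p, q) (T (a, (m, n))) = op3 T (op3 T (bvec a) (bvec m) (bvec n)) (bvec p) (bvec q)"
    by (simp add: op3_bvec_bvec)
  also have "\<dots> = lext (\<lambda>(p1, p'). lext (\<lambda>(p2, p3). lext (\<lambda>(q1, q'). lext (\<lambda>(q2, q3).
      op3 T (T (a, (p1, q1))) (T (m, (p2, q2))) (T (n, (p3, q3)))) (D q')) (D q)) (D p')) (D p)"
    by (subst op3_self_distrib)
      (simp_all add: lext_tens lext_Delta2 fsupp_Delta2 split_beta split_beta')
  also have "\<dots> = lext (\<lambda>(p1, p'). lext (\<lambda>(q1, q'). lext (\<lambda>(p2, p3). lext (\<lambda>(q2, q3).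
      op3 T (T (a, (p1, q1))) (T (m, (p2, q2))) (T (n, (p3, q3)))) (D q')) (D p')) (D q)) (D p)"
    by (simp only: split_beta', (rule lext_arg_cong lext_commute)+)
  also have "\<dots> = lext (\<lambda>(w1, w2). ract_ext T (lhd ((m, n), w2)) (T (a, w1))) (DD (p, q))"
    by (simp add: lext_DD lhdT_eq ract_ext_lext ract_ext_tens split_beta split_beta')
  finally show ?thesis
    by (simp add: w V)
qed

lemma lhdT_lhdT_eq:
  "lext (\<lambda>z. lhd (z, W)) (lhd ((u, v), V))
 = lext (\<lambda>(v1, v2). lext (\<lambda>(p, q). lext (\<lambda>(a, b). lext (\<lambda>(c, d).
     tens (ract_ext T (lhd (v1, c)) (T (u, a))) (ract_ext T (lhd (v2, d)) (T (v, b))))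
   (DD q)) (DD p)) (DD W)) (DD V)"
proof -
  have "lext (\<lambda>z. lhd (z, W)) (lhd ((u, v), V))
      = lext (\<lambda>(v1, v2). lext (\<lambda>(w1, w2). tens (ract T w1 (T (u, v1))) (ract T w2 (T (v, v2))))
          (DD W)) (DD V)"
    by (simp add: lhdT_eq lext_lext lext_lhdT_tens split_beta')
  also have "\<dots> = lext (\<lambda>(v1, v2). lext (\<lambda>(w1, w2). lext (\<lambda>(a, b). lext (\<lambda>(c, d).
      tens (ract_ext T (lhd (v1, b)) (T (u, a))) (ract_ext T (lhd (v2, d)) (T (v, c))))
    (DD w2)) (DD w1)) (DD W)) (DD V)"
    by (simp only: ract_T_eq tens_lext_left tens_lext_right split_beta',
        (rule lext_arg_cong lext_commute)+)
  also have "\<dots> = lext (\<lambda>(v1, v2). lext (\<lambda>(p, q). lext (\<lambda>(a, b). lext (\<lambda>(c, d).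
      tens (ract_ext T (lhd (v1, c)) (T (u, a))) (ract_ext T (lhd (v2, d)) (T (v, b))))
    (DD q)) (DD p)) (DD W)) (DD V)"
    by (subst cocommutative_middle_swap[OF coalgebra_DD cocommutative_DD]) (rule refl)
  finally show ?thesis .
qed

lemma op2_lhdT_lhdT_eq:
  "lext (\<lambda>(p, q). op2 lhd (lhd ((u, v), p)) (lhd (V, q))) (DD W)
 = lext (\<lambda>(p, q). lext (\<lambda>(a, b). lext (\<lambda>(v1, v2). lext (\<lambda>(c, d).
     tens (ract_ext T (lhd (v1, c)) (T (u, a))) (ract_ext T (lhd (v2, d)) (T (v, b))))
   (DD q)) (DD V)) (DD p)) (DD W)"
proof -
  have lhd_basis: "lext (\<lambda>x. lhd (x, z)) (lhd ((u, v), p)) = lext (\<lambda>(a, b).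
      lext (\<lambda>(y1, y2). tens (ract T y1 (T (u, a))) (ract T y2 (T (v, b)))) (DD z)) (DD p)" for p z
    by (simp add: lhdT_eq lext_lext lext_lhdT_tens split_beta')
  have comult: "lext (\<lambda>z. lext G (DD z)) (lhd (V, q)) = lext (\<lambda>(v1, v2). lext (\<lambda>(q1, q2).
      lext (\<lambda>z1. lext (\<lambda>z2. G (z1, z2)) (lhd (v2, q2))) (lhd (v1, q1))) (DD q)) (DD V)" for G q
    by (subst coalg_hom_comult[OF coalg_hom_lhdT]) (simp_all add: lext_tcD fsupp_tcD split_beta')
  have "op2 lhd (lhd ((u, v), p)) (lhd (V, q))
      = lext (\<lambda>(a, b). lext (\<lambda>(v1, v2). lext (\<lambda>(c, d).
          tens (ract_ext T (lhd (v1, c)) (T (u, a))) (ract_ext T (lhd (v2, d)) (T (v, b))))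
        (DD q)) (DD V)) (DD p)" for p q
  proof -
    have "op2 lhd (lhd ((u, v), p)) (lhd (V, q))
        = lext (\<lambda>z. lext (\<lambda>x. lhd (x, z)) (lhd ((u, v), p))) (lhd (V, q))"
      by (simp add: op2_eq_lext lext_commute[of _ "lhd (V, q)"])
    also have "\<dots> = lext (\<lambda>(a, b). lext (\<lambda>z. lext (\<lambda>(y1, y2).
        tens (ract T y1 (T (u, a))) (ract T y2 (T (v, b)))) (DD z)) (lhd (V, q))) (DD p)"
      by (simp only: lhd_basis split_beta' lext_commute[of _ "DD p"])
    also have "\<dots> = lext (\<lambda>(a, b). lext (\<lambda>(v1, v2). lext (\<lambda>(c, d).
        tens (ract_ext T (lhd (v1, c)) (T (u, a))) (ract_ext T (lhd (v2, d)) (T (v, b))))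
      (DD q)) (DD V)) (DD p)"
      by (simp add: comult ract_ext_def tens_lext_lext split_beta')
    finally show ?thesis .
  qed
  then show ?thesis
    by simp
qed

lemma lhdT_self_distrib_basis:
  "lext (\<lambda>z. lhd (z, W)) (lhd (U, V)) = lext (\<lambda>(p, q). op2 lhd (lhd (U, p)) (lhd (V, q))) (DD W)"
proof -
  obtain u v where U: "U = (u, v)" by (cases U)
  show ?thesis
    unfolding U lhdT_lhdT_eq op2_lhdT_lhdT_eq by (simp only: split_beta' lext_commute[of _ "DD V"])
qed

lemma linear_shelf_lhdT: "linear_shelf DD (tce e e) lhd"
  unfolding linear_shelf_def
proof (intro conjI allI impI)
  show "coalgebra DD (tce e e)" by (rule coalgebra_DD)
  show "coalg_hom (tcD DD DD) (tce (tce e e) (tce e e)) DD (tce e e) lhd" by (rule coalg_hom_lhdT)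
  fix u v w :: "'a \<times> 'a \<Rightarrow> 'k"
  assume "fsupp u" "fsupp v" "fsupp w"
  then show "op2 lhd (op2 lhd u v) w
      = lext (\<lambda>(p, q). op2 lhd (op2 lhd u (bvec p)) (op2 lhd v (bvec q))) (lext DD w)"
    by (intro self_distrib_of_basis) (simp_all add: lhdT_self_distrib_basis)
qed

lemma Rlhd_eq_RT: "Rlhd DD lhd = RT D T"
proof (rule ext)
  fix X :: "('a \<times> 'a) \<times> ('a \<times> 'a)"
  obtain u v m n where X: "X = ((u, v), (m, n))" by (metis prod.collapse)
  have "Rlhd DD lhd X = lext (\<lambda>(m1, m'). lext (\<lambda>(n1, n'). lext (\<lambda>(m2, m3). lext (\<lambda>(n2, n3).
      tens (bvec (m1, n1)) (tens (T (u, (m2, n2))) (T (v, (m3, n3))))) (D n')) (D m')) (D n)) (D m)"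
    unfolding X Rlhd_def by (simp add: lext_DD lhdT_eq tens_lext_right split_beta')
  also have "\<dots> = lext (\<lambda>(m1, m'). lext (\<lambda>(m2, m3). lext (\<lambda>(n1, n'). lext (\<lambda>(n2, n3).
      tens (bvec (m1, n1)) (tens (T (u, (m2, n2))) (T (v, (m3, n3))))) (D n')) (D n)) (D m')) (D m)"
    by (simp only: split_beta', (rule lext_arg_cong lext_commute)+)
  also have "\<dots> = RT D T X"
    unfolding X RT_def by (simp add: lext_tens lext_Delta2 fsupp_Delta2 split_beta')
  finally show "Rlhd DD lhd X = RT D T X" .
qed

end

section \<open>Rack inverses\<close>

text \<open>A rack inverse \<open>T'\<close> of \<open>T\<close> is applied as \<open>T'(T(x, y_(2), z_(2)), z_(1), y_(1))\<close>,
  with its last two arguments in reversed order; the rack inverse of \<open>lhdT D T\<close> is therefore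
  built from \<open>swapT T'\<close>.\<close>

definition swapT :: "('a \<times> ('a \<times> 'a) \<Rightarrow> 'b) \<Rightarrow> 'a \<times> ('a \<times> 'a) \<Rightarrow> 'b"
  where "swapT T = (\<lambda>(a, (b, c)). T (a, (c, b)))"

lemma swapT_apply [simp]: "swapT T (a, (b, c)) = T (a, (c, b))"
  by (simp add: swapT_def)

lemma op3_swapT: "fsupp x \<Longrightarrow> fsupp y \<Longrightarrow> fsupp z \<Longrightarrow> op3 (swapT T) x y z = op3 T x z y"
  by (simp add: op3_eq_lext lext_commute[of _ z])

lemma ract_swapT: "ract (swapT S) (p, q) x = ract S (q, p) x"
  by (simp add: ract_def)

lemma coalg_hom_swapT:
  assumes hom: "coalg_hom (tcD D (tcD D D)) (tce e (tce e e)) D e T" and fD: "\<And>a. fsupp (D a)"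
  shows "coalg_hom (tcD D (tcD D D)) (tce e (tce e e)) D e (swapT T)"
  unfolding coalg_hom_def
proof (intro conjI allI)
  show "linmap (swapT T)"
    using hom by (simp add: coalg_hom_def linmap_def swapT_def split_beta)
next
  fix X :: "'a \<times> 'a \<times> 'a"
  obtain a b c where X: "X = (a, (b, c))" by (metis prod.collapse)
  have "lext D (swapT T X) = tmap T T (tcD D (tcD D D) (a, (c, b)))"
    using hom unfolding X coalg_hom_def by simp
  also have "\<dots> = lext (\<lambda>(a1, a2). lext (\<lambda>(c1, c2). lext (\<lambda>(b1, b2).
      tens (T (a1, (c1, b1))) (T (a2, (c2, b2)))) (D b)) (D c)) (D a)"
    unfolding tmap_def by (simp add: lext_tcD fsupp_tcD fD split_beta')
  also have "\<dots> = lext (\<lambda>(a1, a2). lext (\<lambda>(b1, b2). lext (\<lambda>(c1, c2).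
      tens (T (a1, (c1, b1))) (T (a2, (c2, b2)))) (D c)) (D b)) (D a)"
    by (simp only: split_beta' lext_commute[of _ "D b"])
  also have "\<dots> = tmap (swapT T) (swapT T) (tcD D (tcD D D) X)"
    unfolding tmap_def X by (simp add: lext_tcD fsupp_tcD fD split_beta')
  finally show "lext D (swapT T X) = tmap (swapT T) (swapT T) (tcD D (tcD D D) X)" .
next
  fix X :: "'a \<times> 'a \<times> 'a"
  obtain a b c where X: "X = (a, (b, c))" by (metis prod.collapse)
  show "lfun e (swapT T X) = tce e (tce e e) X"
    using hom unfolding X coalg_hom_def by (simp add: tce_def mult_ac)
qed

lemma trilinear_shelf_swapT:
  fixes D :: "'a \<Rightarrow> 'a \<times> 'a \<Rightarrow> 'k::comm_ring_1"
  assumes cc: "cocommutative D" and ts: "trilinear_shelf D e T"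
  shows "trilinear_shelf D e (swapT T)"
  unfolding trilinear_shelf_def
proof (intro conjI allI impI)
  have coal: "coalgebra D e" and hom: "coalg_hom (tcD D (tcD D D)) (tce e (tce e e)) D e T"
    using ts by (simp_all add: trilinear_shelf_def)
  have fD: "\<And>a. fsupp (D a)" using coal by (rule coalgebra_fsupp)
  have fT: "\<And>x. fsupp (T x)" using hom unfolding coalg_hom_def linmap_def by blast
  show "coalgebra D e" by (rule coal)
  show "coalg_hom (tcD D (tcD D D)) (tce e (tce e e)) D e (swapT T)"
    using hom fD by (rule coalg_hom_swapT)
  fix x y z u v :: "'a \<Rightarrow> 'k"
  assume fx: "fsupp x" and fy: "fsupp y" and fz: "fsupp z" and fu: "fsupp u" and fv: "fsupp v"
  note fsupps = fx fy fz fu fv fT fD fsupp_Delta2 fsupp_op3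
  let ?F = "\<lambda>((p1, (p2, p3)), (q1, (q2, q3))).
    op3 T (op3 T x (bvec p1) (bvec q1)) (op3 T z (bvec p2) (bvec q2)) (op3 T y (bvec p3) (bvec q3))"
  have "op3 (swapT T) (op3 (swapT T) x y z) u v = op3 T (op3 T x z y) v u"
    by (simp add: op3_swapT fsupps)
  also have "\<dots> = lext ?F (tens (Delta2 D v) (Delta2 D u))"
    using ts fsupps by (simp add: trilinear_shelf_def)
  also have "\<dots> = lext (\<lambda>Q. lext (\<lambda>P. ?F (P, Q)) (Delta2 D v)) (Delta2 D u)"
    by (simp add: lext_tens fsupps lext_commute[of _ "Delta2 D u"])
  also have "\<dots> = lext (\<lambda>(q1, (q2, q3)). lext (\<lambda>(p1, (p2, p3)).
      ?F ((p1, (p3, p2)), (q1, (q3, q2)))) (Delta2 D v)) (Delta2 D u)"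
    by (subst cocommutative_Delta2_swap[OF fD fu cc], rule lext_arg_cong, simp only: split_beta',
        subst cocommutative_Delta2_swap[OF fD fv cc], simp add: split_beta')
  also have "\<dots> = lext (\<lambda>((p1, (p2, p3)), (q1, (q2, q3))).
      op3 (swapT T) (op3 (swapT T) x (bvec p1) (bvec q1)) (op3 (swapT T) y (bvec p2) (bvec q2))
        (op3 (swapT T) z (bvec p3) (bvec q3))) (tens (Delta2 D u) (Delta2 D v))"
    by (simp add: lext_tens fsupps split_beta' op3_swapT)
  finally show "op3 (swapT T) (op3 (swapT T) x y z) u v = lext (\<lambda>((p1, (p2, p3)), (q1, (q2, q3))).
      op3 (swapT T) (op3 (swapT T) x (bvec p1) (bvec q1)) (op3 (swapT T) y (bvec p2) (bvec q2))
        (op3 (swapT T) z (bvec p3) (bvec q3))) (tens (Delta2 D u) (Delta2 D v))" .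
qed

lemma lhdT_rack_identity_basis:
  assumes "cocomm_trilinear_shelf D e T1" and "cocomm_trilinear_shelf D e T2"
    and inv: "\<And>a p. lext (\<lambda>(p1, p2). ract T2 p1 (T1 (a, p2))) (tcD D D p)
                    = (\<lambda>c. tce e e p * bvec a c)"
  shows "lext (\<lambda>(p, q). op2 (lhdT D T2) (lhdT D T1 (U, q)) (bvec p)) (tcD D D V)
       = (\<lambda>c. tce e e V * bvec U c)"
proof -
  interpret A: cocomm_trilinear_shelf D e T1 by fact
  interpret B: cocomm_trilinear_shelf D e T2 by fact
  obtain a b where U: "U = (a, b)" by (cases U)
  have "lext (\<lambda>(p, q). op2 (lhdT D T2) (lhdT D T1 (U, q)) (bvec p)) (tcD D D V)
      = lext (\<lambda>(p, q). lext (\<lambda>(q1, q2). lext (\<lambda>(p1, p2).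
          tens (ract T2 p1 (T1 (a, q1))) (ract T2 p2 (T1 (b, q2)))) (tcD D D p))
        (tcD D D q)) (tcD D D V)"
    unfolding U
    by (simp only: op2_bvec_right[OF A.fsupp_lhdT])
      (simp add: A.lhdT_eq lext_lext B.lext_lhdT_tens split_beta')
  also have "\<dots> = lext (\<lambda>(p, q). lext (\<lambda>(p1, p2). lext (\<lambda>(q1, q2).
          tens (ract T2 p1 (T1 (a, q1))) (ract T2 p2 (T1 (b, q2)))) (tcD D D q))
        (tcD D D p)) (tcD D D V)"
    by (simp only: split_beta', (rule lext_arg_cong lext_commute)+)
  also have "\<dots> = lext (\<lambda>(p, q). lext (\<lambda>(p1, p2). lext (\<lambda>(q1, q2).
          tens (ract T2 p1 (T1 (a, p2))) (ract T2 q1 (T1 (b, q2)))) (tcD D D q))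
        (tcD D D p)) (tcD D D V)"
    by (rule cocommutative_middle_swap[OF A.coalgebra_DD A.cocommutative_DD])
  also have "\<dots> = lext (\<lambda>(p, q). tens (lext (\<lambda>(p1, p2). ract T2 p1 (T1 (a, p2))) (tcD D D p))
          (lext (\<lambda>(q1, q2). ract T2 q1 (T1 (b, q2))) (tcD D D q))) (tcD D D V)"
    by (simp add: tens_lext_lext split_beta')
  also have "\<dots> = lext (\<lambda>(p, q) c. tce e e p * (tce e e q * bvec U c)) (tcD D D V)"
    by (simp only: inv) (rule lext_arg_cong, auto simp: U tens_def bvec_def split_beta' fun_eq_iff)
  also have "\<dots> = (\<lambda>c. tce e e V * bvec U c)"
    by (rule coalgebra_counit_left[OF A.coalgebra_DD])
  finally show ?thesis .
qed

lemma lhdT_rack_identity: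
  assumes "cocomm_trilinear_shelf D e T1" and "cocomm_trilinear_shelf D e T2"
    and "\<And>a p. lext (\<lambda>(p1, p2). ract T2 p1 (T1 (a, p2))) (tcD D D p) = (\<lambda>c. tce e e p * bvec a c)"
    and u: "fsupp u" and v: "fsupp v"
  shows "lext (\<lambda>(p, q). op2 (lhdT D T2) (op2 (lhdT D T1) u (bvec q)) (bvec p)) (lext (tcD D D) v)
       = (\<lambda>x. lfun (tce e e) v * u x)"
proof -
  interpret A: cocomm_trilinear_shelf D e T1 by fact
  interpret B: cocomm_trilinear_shelf D e T2 by fact
  have "lext (\<lambda>(p, q). op2 (lhdT D T2) (op2 (lhdT D T1) u (bvec q)) (bvec p)) (lext (tcD D D) v)
      = lext (\<lambda>V. lext (\<lambda>(p, q).
          lext (\<lambda>U. op2 (lhdT D T2) (lhdT D T1 (U, q)) (bvec p)) u) (tcD D D V)) v"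
    using u v by (simp add: lext_lext op2_bvec_right[OF u] op2_lext_left split_beta')
  also have "\<dots> = lext (\<lambda>V. lext (\<lambda>U.
      lext (\<lambda>(p, q). op2 (lhdT D T2) (lhdT D T1 (U, q)) (bvec p)) (tcD D D V)) u) v"
    by (simp only: split_beta', (rule lext_arg_cong lext_commute)+)
  also have "\<dots> = lext (\<lambda>V. lext (\<lambda>U c. tce e e V * bvec U c) u) v"
    by (simp only: lhdT_rack_identity_basis[OF assms(1-3)])
  also have "\<dots> = (\<lambda>x. lfun (tce e e) v * u x)"
    by (simp add: lext_const_mult lext_bvec_id u lext_mult_lfun)
  finally show ?thesis .
qed

lemma swapT_rack_inverse_left:
  assumes fD: "\<And>a. fsupp (D a)" and fT: "\<And>x. fsupp (T x)"
    and inv: "\<And>x y z. fsupp x \<Longrightarrow> fsupp y \<Longrightarrow> fsupp z \<Longrightarrow>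
      lext (\<lambda>((p1, p2), (q1, q2)). op3 S (op3 T x (bvec p2) (bvec q2)) (bvec q1) (bvec p1))
        (tens (lext D y) (lext D z)) = (\<lambda>w. lfun e y * lfun e z * x w)"
  shows "lext (\<lambda>(p1, p2). ract (swapT S) p1 (T (a, p2))) (tcD D D p)
       = (\<lambda>c. tce e e p * bvec a c)"
proof -
  obtain m n where p: "p = (m, n)" by (cases p)
  have "lext (\<lambda>(p1, p2). ract (swapT S) p1 (T (a, p2))) (tcD D D p)
      = lext (\<lambda>(m1, m2). lext (\<lambda>(n1, n2). ract S (n1, m1) (T (a, (m2, n2)))) (D n)) (D m)"
    unfolding p by (simp add: lext_tcD fD ract_swapT split_beta')
  also have "\<dots> = (\<lambda>c. e m * e n * bvec a c)"
    using inv[of "bvec a" "bvec m" "bvec n"]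
    by (simp add: lext_tens fD fT op3_bvec_bvec split_beta')
  finally show ?thesis
    by (simp add: p tce_def)
qed

lemma swapT_rack_inverse_right:
  assumes fD: "\<And>a. fsupp (D a)" and fS: "\<And>x. fsupp (S x)"
    and inv: "\<And>x y z. fsupp x \<Longrightarrow> fsupp y \<Longrightarrow> fsupp z \<Longrightarrow>
      lext (\<lambda>((p1, p2), (q1, q2)). op3 T (op3 S x (bvec p2) (bvec q2)) (bvec q1) (bvec p1))
        (tens (lext D y) (lext D z)) = (\<lambda>w. lfun e y * lfun e z * x w)"
  shows "lext (\<lambda>(p1, p2). ract T p1 (swapT S (a, p2))) (tcD D D p)
       = (\<lambda>c. tce e e p * bvec a c)"
proof -
  obtain m n where p: "p = (m, n)" by (cases p)
  have "lext (\<lambda>(p1, p2). ract T p1 (swapT S (a, p2))) (tcD D D p)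
      = lext (\<lambda>(n1, n2). lext (\<lambda>(m1, m2). ract T (m1, n1) (S (a, (n2, m2)))) (D m)) (D n)"
    unfolding p lext_tcD[OF fD fD]
    by (simp only: split_beta' fst_conv snd_conv swapT_apply lext_commute[of _ "D n"])
  also have "\<dots> = (\<lambda>c. e n * e m * bvec a c)"
    using inv[of "bvec a" "bvec n" "bvec m"]
    by (simp add: lext_tens fD fS op3_bvec_bvec split_beta')
  finally show ?thesis
    by (simp add: p tce_def mult.commute)
qed

lemma linear_rack_lhdT:
  assumes cc: "cocommutative D" and rack: "trilinear_rack D e T"
  shows "linear_rack (tcD D D) (tce e e) (lhdT D T)"
proof -
  obtain S where shelf_S: "trilinear_shelf D e S"
    and inv_left: "\<And>x y z. fsupp x \<Longrightarrow> fsupp y \<Longrightarrow> fsupp z \<Longrightarrow>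
      lext (\<lambda>((p1, p2), (q1, q2)). op3 S (op3 T x (bvec p2) (bvec q2)) (bvec q1) (bvec p1))
        (tens (lext D y) (lext D z)) = (\<lambda>w. lfun e y * lfun e z * x w)"
    and inv_right: "\<And>x y z. fsupp x \<Longrightarrow> fsupp y \<Longrightarrow> fsupp z \<Longrightarrow>
      lext (\<lambda>((p1, p2), (q1, q2)). op3 T (op3 S x (bvec p2) (bvec q2)) (bvec q1) (bvec p1))
        (tens (lext D y) (lext D z)) = (\<lambda>w. lfun e y * lfun e z * x w)"
    using rack unfolding trilinear_rack_def by blast
  have shelf_T: "trilinear_shelf D e T"
    using rack by (simp add: trilinear_rack_def)
  interpret A: cocomm_trilinear_shelf D e T
    using cc shelf_T by unfold_locales
  interpret B: cocomm_trilinear_shelf D e "swapT S"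
    using cc trilinear_shelf_swapT[OF cc shelf_S] by unfold_locales
  have fS: "\<And>x. fsupp (S x)"
    using shelf_S unfolding trilinear_shelf_def coalg_hom_def linmap_def by blast
  note shelves = A.cocomm_trilinear_shelf_axioms B.cocomm_trilinear_shelf_axioms
  show ?thesis
    unfolding linear_rack_def
    using A.linear_shelf_lhdT B.linear_shelf_lhdT
      lhdT_rack_identity[OF shelves swapT_rack_inverse_left[OF A.fsupp_D A.fsupp_T inv_left]]
      lhdT_rack_identity[OF shelves(2, 1) swapT_rack_inverse_right[OF A.fsupp_D fS inv_right]]
    by blast
qed

theorem theorem3p13:
  fixes D :: "'a \<Rightarrow> 'a \<times> 'a \<Rightarrow> 'k::field" and e :: "'a \<Rightarrow> 'k"
    and T :: "'a \<times> ('a \<times> 'a) \<Rightarrow> 'a \<Rightarrow> 'k"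
  assumes "coalgebra D e" and "cocommutative D" and "trilinear_shelf D e T"
  shows "linear_shelf (tcD D D) (tce e e) (lhdT D T)
     \<and> (trilinear_rack D e T \<longrightarrow>
          linear_rack (tcD D D) (tce e e) (lhdT D T)
          \<and> Rlhd (tcD D D) (lhdT D T) = RT D T)"
proof -
  (* coalgebra D e is part of trilinear_shelf D e T *)
  interpret cocomm_trilinear_shelf D e T
    using assms(2, 3) by unfold_locales
  show ?thesis
    using linear_shelf_lhdT linear_rack_lhdT[OF assms(2)] Rlhd_eq_RT by blast
qed

end
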